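(* There exist constants $c>0$ and $m_0$ such that for every integer $m\ge m_0$ the following holds: every unlabeled tabletop rearrangement instance with $n=m^2$ congruent objects whose unlabeled dependency graph is isomorphic to the dependency grid $\mathcal{D}(m,2m)$ (by an isomorphism sending start vertices to start vertices) has $\mathrm{MRB}\ge c\,m=c\sqrt{n}$.
   Context: An unlabeled tabletop rearrangement instance consists of $n$ congruent, interchangeable objects in a bounded planar workspace with a feasible start arrangement and a feasible goal arrangement (poses in $SE(2)$; feasible means no two placed footprints have intersecting interiors). Its unlabeled dependency graph is bipartite, with a start vertex for each start pose and a goal vertex for each goal pose, and an edge between a start and a goal vertex iff footprints at those poses overlap. A plan with external buffers: each object is picked from its start pose exactly once and either placed at an unoccupied goal pose or into an external buffer (unlimited capacity), in the latter case later moved from the buffer to an unoccupied goal pose; an object may be placed at a goal pose only if it overlaps no object currently in the workspace; at the end all goal poses are occupied. Running buffers at a moment = number of objects in buffers; $\mathrm{MRB}$ = minimum over plans of the maximum number of running buffers. The dependency grid $\mathcal{D}(w,h)$ is the grid graph with vertices $v_{x,y}$, $1\le x\le w$ (columns), $1\le y\le h$ (rows), where $v_{x,y}$ and $v_{x',y'}$ are adjacent iff $|x-x'|+|y-y'|=1$; $v_{x,y}$ is a start vertex if $x+y$ is even and a goal vertex otherwise. *)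

theory Defs
  imports "HOL-Analysis.Analysis"
begin

text \<open>The plane is modelled by the complex numbers. A pose in SE(2) is a pair
(translation, rotation angle). All objects are congruent: they share one footprint
shape F (given in the object frame); the footprint of an object at pose p is the image
of F under the rigid motion p.\<close>

type_synonym pose = "complex \<times> real"

definition footprint :: "complex set \<Rightarrow> pose \<Rightarrow> complex set" where
  "footprint F p = (\<lambda>z. fst p + cis (snd p) * z) ` F"

definition overlap :: "complex set \<Rightarrow> pose \<Rightarrow> pose \<Rightarrow> bool" where
  "overlap F p q \<longleftrightarrow> interior (footprint F p) \<inter> interior (footprint F q) \<noteq> {}"

definition feasible_arr :: "complex set \<Rightarrow> nat \<Rightarrow> (nat \<Rightarrow> pose) \<Rightarrow> bool" where
  "feasible_arr F n P \<longleftrightarrow> (\<forall>i<n. \<forall>j<n. i \<noteq> j \<longrightarrow> \<not> overlap F (P i) (P j))"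

definition utr_instance ::
  "complex set \<Rightarrow> complex set \<Rightarrow> nat \<Rightarrow> (nat \<Rightarrow> pose) \<Rightarrow> (nat \<Rightarrow> pose) \<Rightarrow> bool" where
  "utr_instance F W n s g \<longleftrightarrow>
     bounded W \<and>
     (\<forall>i<n. footprint F (s i) \<subseteq> W) \<and> (\<forall>j<n. footprint F (g j) \<subseteq> W) \<and>
     feasible_arr F n s \<and> feasible_arr F n g"

text \<open>Actions: move the object at start pose i directly to goal pose j; move the object
at start pose i into the external buffer; move some buffered object to goal pose j
(objects are interchangeable, so buffered objects need no identity).
A state is (start poses still occupied, goal poses occupied, number of objects in buffer).\<close>

datatype action = ToGoal nat nat | ToBuffer nat | FromBuffer nat

type_synonym state = "nat set \<times> nat set \<times> nat"

definition placeable ::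
  "complex set \<Rightarrow> (nat \<Rightarrow> pose) \<Rightarrow> (nat \<Rightarrow> pose) \<Rightarrow> nat set \<Rightarrow> nat set \<Rightarrow> pose \<Rightarrow> bool" where
  "placeable F s g S G q \<longleftrightarrow>
     (\<forall>i\<in>S. \<not> overlap F (s i) q) \<and> (\<forall>j\<in>G. \<not> overlap F (g j) q)"

fun step ::
  "complex set \<Rightarrow> nat \<Rightarrow> (nat \<Rightarrow> pose) \<Rightarrow> (nat \<Rightarrow> pose) \<Rightarrow> action \<Rightarrow> state \<Rightarrow> state option" where
  "step F n s g (ToGoal i j) (S, G, b) =
     (if i \<in> S \<and> j < n \<and> j \<notin> G \<and> placeable F s g (S - {i}) G (g j)
      then Some (S - {i}, insert j G, b) else None)"
| "step F n s g (ToBuffer i) (S, G, b) =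
     (if i \<in> S then Some (S - {i}, G, Suc b) else None)"
| "step F n s g (FromBuffer j) (S, G, b) =
     (if 0 < b \<and> j < n \<and> j \<notin> G \<and> placeable F s g S G (g j)
      then Some (S, insert j G, b - 1) else None)"

fun exec ::
  "complex set \<Rightarrow> nat \<Rightarrow> (nat \<Rightarrow> pose) \<Rightarrow> (nat \<Rightarrow> pose) \<Rightarrow> state \<Rightarrow> action list \<Rightarrow> state list option" where
  "exec F n s g st [] = Some [st]"
| "exec F n s g st (a # as) =
     (case step F n s g a st of
        None \<Rightarrow> None
      | Some st' \<Rightarrow> map_option (Cons st) (exec F n s g st' as))"

definition init_state :: "nat \<Rightarrow> state" where
  "init_state n = ({..<n}, {}, 0)"

definition valid_plan ::
  "complex set \<Rightarrow> nat \<Rightarrow> (nat \<Rightarrow> pose) \<Rightarrow> (nat \<Rightarrow> pose) \<Rightarrow> action list \<Rightarrow> bool" where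
  "valid_plan F n s g p \<longleftrightarrow>
     (\<exists>sts. exec F n s g (init_state n) p = Some sts \<and> fst (snd (last sts)) = {..<n})"

definition max_running_buffers ::
  "complex set \<Rightarrow> nat \<Rightarrow> (nat \<Rightarrow> pose) \<Rightarrow> (nat \<Rightarrow> pose) \<Rightarrow> action list \<Rightarrow> nat" where
  "max_running_buffers F n s g p = Max ((\<lambda>st. snd (snd st)) ` set (the (exec F n s g (init_state n) p)))"

definition MRB :: "complex set \<Rightarrow> nat \<Rightarrow> (nat \<Rightarrow> pose) \<Rightarrow> (nat \<Rightarrow> pose) \<Rightarrow> nat" where
  "MRB F n s g = (INF p \<in> {p. valid_plan F n s g p}. max_running_buffers F n s g p)"

definition grid_vertex :: "nat \<Rightarrow> nat \<Rightarrow> nat \<times> nat \<Rightarrow> bool" where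
  "grid_vertex w h v \<longleftrightarrow> 1 \<le> fst v \<and> fst v \<le> w \<and> 1 \<le> snd v \<and> snd v \<le> h"

definition grid_starts :: "nat \<Rightarrow> nat \<Rightarrow> (nat \<times> nat) set" where
  "grid_starts w h = {v. grid_vertex w h v \<and> even (fst v + snd v)}"

definition grid_goals :: "nat \<Rightarrow> nat \<Rightarrow> (nat \<times> nat) set" where
  "grid_goals w h = {v. grid_vertex w h v \<and> odd (fst v + snd v)}"

definition grid_adj :: "nat \<times> nat \<Rightarrow> nat \<times> nat \<Rightarrow> bool" where
  "grid_adj u v \<longleftrightarrow> \<bar>int (fst u) - int (fst v)\<bar> + \<bar>int (snd u) - int (snd v)\<bar> = 1"

definition dep_graph_iso_grid ::
  "complex set \<Rightarrow> nat \<Rightarrow> (nat \<Rightarrow> pose) \<Rightarrow> (nat \<Rightarrow> pose) \<Rightarrow> nat \<Rightarrow> nat \<Rightarrow> bool" where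
  "dep_graph_iso_grid F n s g w h \<longleftrightarrow>
     (\<exists>\<sigma> \<tau>. bij_betw \<sigma> {..<n} (grid_starts w h) \<and> bij_betw \<tau> {..<n} (grid_goals w h) \<and>
        (\<forall>i<n. \<forall>j<n. overlap F (s i) (g j) \<longleftrightarrow> grid_adj (\<sigma> i) (\<tau> j)))"

end

(*
  At every moment of a plan the occupied start poses and the filled goal poses are pairwise
  non-overlapping: a goal is filled only when it overlaps no object in the workspace, and start
  poses are only ever vacated.  Through the isomorphism they are a set Y of start vertices and a
  set X of goal vertices of D(m, 2m) with no edge between them, and since goals are filled one at
  a time, some moment has |X| = m * floor(m/2).

  Tile the grid by vertical dominoes, one start and one goal vertex each, indexed by an m x m
  board.  A board row without an empty domino (neither vertex in X or Y) lies entirely in X or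
  entirely in Y.  If rows of both kinds exist, every column of one parity has an empty domino
  between them; otherwise counting |X| row by row leaves floor(m/2) rows with an empty domino.
  Either way at least floor(m/2) objects are in neither a start nor a goal pose, i.e. in the
  buffer.
*)
theory Submission
  imports Defs
begin

lemma card_preimage_bij_betw:
  assumes "bij_betw f A B" and "C \<subseteq> B"
  shows "card {a\<in>A. f a \<in> C} = card C"
proof -
  have "bij_betw f {a\<in>A. f a \<in> C} C"
    using assms unfolding bij_betw_def inj_on_def by auto
  then show ?thesis by (rule bij_betw_same_card)
qed

lemma card_three_way_split:
  assumes "finite D" and "\<And>d. \<not> (P d \<and> Q d)"
  shows "card D = card {d\<in>D. P d} + card {d\<in>D. Q d} + card {d\<in>D. \<not> P d \<and> \<not> Q d}"
proof -
  have "card D = card (({d\<in>D. P d} \<union> {d\<in>D. Q d}) \<union> {d\<in>D. \<not> P d \<and> \<not> Q d})"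
    by (rule arg_cong[where f = card]) blast
  also have "\<dots> = card ({d\<in>D. P d} \<union> {d\<in>D. Q d}) + card {d\<in>D. \<not> P d \<and> \<not> Q d}"
    using assms(1) by (intro card_Un_disjoint) auto
  also have "card ({d\<in>D. P d} \<union> {d\<in>D. Q d}) = card {d\<in>D. P d} + card {d\<in>D. Q d}"
    using assms by (intro card_Un_disjoint) auto
  finally show ?thesis .
qed

lemma interval_propagation:
  fixes P Q :: "nat \<Rightarrow> bool"
  assumes no_switch: "\<And>k. P k \<Longrightarrow> \<not> Q (Suc k)"
    and cover: "\<forall>k\<in>{a..b}. P k \<or> Q k"
    and "P a"
  shows "\<forall>k\<in>{a..b}. P k"
proof
  fix k assume "k \<in> {a..b}"
  then have "a \<le> k" "k \<le> b" by auto
  then show "P k"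
  proof (induction k rule: dec_induct)
    case base
    show ?case using \<open>P a\<close> .
  next
    case (step k)
    then show ?case using cover no_switch by auto
  qed
qed

lemma card_odd_atLeastAtMost_ge: "m div 2 \<le> card {x\<in>{1..m}. odd x}"
proof -
  have "(\<lambda>i. 2 * i + 1) ` {..<m div 2} \<subseteq> {x\<in>{1..m}. odd x}" by auto
  then have "card ((\<lambda>i. 2 * i + 1) ` {..<m div 2}) \<le> card {x\<in>{1..m}. odd x}"
    by (intro card_mono) auto
  then show ?thesis by (simp add: card_image inj_on_def)
qed

lemma card_even_atLeastAtMost_ge: "m div 2 \<le> card {x\<in>{1..m}. even x}"
proof -
  have "(\<lambda>i. 2 * i + 2) ` {..<m div 2} \<subseteq> {x\<in>{1..m}. even x}" by auto
  then have "card ((\<lambda>i. 2 * i + 2) ` {..<m div 2}) \<le> card {x\<in>{1..m}. even x}"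
    by (intro card_mono) auto
  then show ?thesis by (simp add: card_image inj_on_def)
qed

lemma card_board_le_meeting_rows:
  "card {d\<in>{1..m}\<times>{1..m}. P d} \<le> m * card {k\<in>{1..m}. \<exists>x\<in>{1..m}. P (x,k)}"
proof -
  have "{d\<in>{1..m}\<times>{1..m}. P d} \<subseteq> {1..m} \<times> {k\<in>{1..m}. \<exists>x\<in>{1..m}. P (x,k)}" by auto
  then have "card {d\<in>{1..m}\<times>{1..m}. P d} \<le> card ({1..m} \<times> {k\<in>{1..m}. \<exists>x\<in>{1..m}. P (x,k)})"
    by (intro card_mono) auto
  then show ?thesis by (simp add: card_cartesian_product)
qed

lemma card_full_rows_le_board:
  "m * card {k\<in>{1..m}. \<forall>x\<in>{1..m}. P (x,k)} \<le> card {d\<in>{1..m}\<times>{1..m}. P d}"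
proof -
  have "{1..m} \<times> {k\<in>{1..m}. \<forall>x\<in>{1..m}. P (x,k)} \<subseteq> {d\<in>{1..m}\<times>{1..m}. P d}" by auto
  then have "card ({1..m} \<times> {k\<in>{1..m}. \<forall>x\<in>{1..m}. P (x,k)}) \<le> card {d\<in>{1..m}\<times>{1..m}. P d}"
    by (intro card_mono) auto
  then show ?thesis by (simp add: card_cartesian_product)
qed

lemma interval_uniform:
  fixes P Q :: "nat \<Rightarrow> bool"
  assumes "\<And>x. P x \<Longrightarrow> \<not> Q (Suc x)" and "\<And>x. Q x \<Longrightarrow> \<not> P (Suc x)"
    and cover: "\<forall>x\<in>{1..m}. P x \<or> Q x"
  shows "(\<forall>x\<in>{1..m}. P x) \<or> (\<forall>x\<in>{1..m}. Q x)"
proof (cases "m = 0")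
  case False
  then have "P 1 \<or> Q 1" using cover by auto
  then show ?thesis
    using interval_propagation[of P Q 1 m] interval_propagation[of Q P 1 m] assms
    by (metis disj_commute)
qed simp

lemma card_blocked_columns_le_gaps:
  fixes A B :: "nat \<times> nat \<Rightarrow> bool"
  assumes disj: "\<And>d. \<not> (A d \<and> B d)"
    and up: "\<And>x k. x \<in> X \<Longrightarrow> A (x,k) \<Longrightarrow> \<not> B (x,Suc k)"
    and X: "X \<subseteq> {1..m}" and k: "1 \<le> k1" "k1 \<le> k2" "k2 \<le> m"
    and bottom: "\<forall>x\<in>X. A (x,k1)" and top: "\<forall>x\<in>X. B (x,k2)"
  shows "card X \<le> card {d\<in>{1..m}\<times>{1..m}. \<not> A d \<and> \<not> B d}"
proof -
  define E where "E = {d\<in>{1..m}\<times>{1..m}. \<not> A d \<and> \<not> B d}"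
  have "x \<in> fst ` E" if x: "x \<in> X" for x
  proof (rule ccontr)
    assume "x \<notin> fst ` E"
    moreover have "(x,k) \<in> {1..m}\<times>{1..m}" if "k \<in> {k1..k2}" for k
      using that x X k by auto
    ultimately have "\<forall>k\<in>{k1..k2}. A (x,k) \<or> B (x,k)"
      unfolding E_def by (metis (mono_tags, lifting) fst_conv image_eqI mem_Collect_eq)
    then have "A (x,k2)"
      using interval_propagation[of "\<lambda>k. A (x,k)" "\<lambda>k. B (x,k)" k1 k2] up x bottom k by auto
    then show False using disj top x by blast
  qed
  then have "card X \<le> card (fst ` E)" by (intro card_mono) (auto simp: E_def)
  also have "\<dots> \<le> card E" by (rule card_image_le) (simp add: E_def)
  finally show ?thesis unfolding E_def .
qed

text \<open>Cell (x, k) stands for a domino of the tiling below: placed means that its goal vertex is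
  filled, waiting that its start vertex is still occupied; the hypotheses say that no filled goal
  is adjacent to an occupied start.\<close>

lemma card_empty_cells_ge_opposite_rows:
  fixes placed waiting :: "nat \<times> nat \<Rightarrow> bool"
  assumes disj: "\<And>d. \<not> (placed d \<and> waiting d)"
    and up_odd: "\<And>x k. odd x \<Longrightarrow> placed (x,k) \<Longrightarrow> \<not> waiting (x,Suc k)"
    and up_even: "\<And>x k. even x \<Longrightarrow> waiting (x,k) \<Longrightarrow> \<not> placed (x,Suc k)"
    and rows: "k1 \<in> {1..m}" "k2 \<in> {1..m}"
    and placed_row: "\<forall>x\<in>{1..m}. placed (x,k1)" and waiting_row: "\<forall>x\<in>{1..m}. waiting (x,k2)"
  shows "m div 2 \<le> card {d\<in>{1..m}\<times>{1..m}. \<not> placed d \<and> \<not> waiting d}"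
proof -
  have "k1 \<noteq> k2" using disj placed_row waiting_row rows by fastforce
  then consider "k1 < k2" | "k2 < k1" by linarith
  then show ?thesis
  proof cases
    case 1
    have "card {x\<in>{1..m}. odd x} \<le> card {d\<in>{1..m}\<times>{1..m}. \<not> placed d \<and> \<not> waiting d}"
    proof (rule card_blocked_columns_le_gaps[of _ _ _ m k1 k2])
      show "\<not> (placed d \<and> waiting d)" for d using disj .
      show "\<not> waiting (x, Suc k)" if "x \<in> {x\<in>{1..m}. odd x}" "placed (x,k)" for x k
        using up_odd that by blast
    qed (use rows placed_row waiting_row 1 in auto)
    then show ?thesis using card_odd_atLeastAtMost_ge[of m] by linarith
  next
    case 2
    have "card {x\<in>{1..m}. even x} \<le> card {d\<in>{1..m}\<times>{1..m}. \<not> waiting d \<and> \<not> placed d}"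
    proof (rule card_blocked_columns_le_gaps[of _ _ _ m k2 k1])
      show "\<not> (waiting d \<and> placed d)" for d using disj by blast
      show "\<not> placed (x, Suc k)" if "x \<in> {x\<in>{1..m}. even x}" "waiting (x,k)" for x k
        using up_even that by blast
    qed (use rows placed_row waiting_row 2 in auto)
    then show ?thesis using card_even_atLeastAtMost_ge[of m] by (simp add: conj_commute)
  qed
qed

lemma card_empty_cells_ge:
  fixes placed waiting :: "nat \<times> nat \<Rightarrow> bool"
  assumes disj: "\<And>d. \<not> (placed d \<and> waiting d)"
    and right_placed: "\<And>x k. placed (x,k) \<Longrightarrow> \<not> waiting (Suc x,k)"
    and right_waiting: "\<And>x k. waiting (x,k) \<Longrightarrow> \<not> placed (Suc x,k)"
    and up_odd: "\<And>x k. odd x \<Longrightarrow> placed (x,k) \<Longrightarrow> \<not> waiting (x,Suc k)"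
    and up_even: "\<And>x k. even x \<Longrightarrow> waiting (x,k) \<Longrightarrow> \<not> placed (x,Suc k)"
    and half: "card {d\<in>{1..m}\<times>{1..m}. placed d} = m * (m div 2)"
  shows "m div 2 \<le> card {d\<in>{1..m}\<times>{1..m}. \<not> placed d \<and> \<not> waiting d}"
proof (cases "\<exists>k1\<in>{1..m}. \<exists>k2\<in>{1..m}.
    (\<forall>x\<in>{1..m}. placed (x,k1)) \<and> (\<forall>x\<in>{1..m}. waiting (x,k2))")
  case True
  then show ?thesis using card_empty_cells_ge_opposite_rows[of placed waiting, OF disj up_odd up_even] by blast
next
  case False
  define E where "E = {d\<in>{1..m}\<times>{1..m}. \<not> placed d \<and> \<not> waiting d}"
  define R where "R = {k\<in>{1..m}. \<exists>x\<in>{1..m}. \<not> placed (x,k) \<and> \<not> waiting (x,k)}"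
  have "R \<subseteq> snd ` E" unfolding R_def E_def by force
  then have "card R \<le> card E"
    using card_image_le[of E snd] card_mono[of "snd ` E" R] unfolding E_def by auto
  moreover have "m div 2 \<le> card R"
  proof -
    have uniform: "(\<forall>x\<in>{1..m}. placed (x,k)) \<or> (\<forall>x\<in>{1..m}. waiting (x,k))"
      if "k \<in> {1..m} - R" for k
      using interval_uniform[of "\<lambda>x. placed (x,k)" "\<lambda>x. waiting (x,k)" m]
        right_placed right_waiting that
      unfolding R_def by blast
    with False consider
        (only_placed) "{1..m} - R \<subseteq> {k\<in>{1..m}. \<forall>x\<in>{1..m}. placed (x,k)}"
      | (only_waiting) "{k\<in>{1..m}. \<exists>x\<in>{1..m}. placed (x,k)} \<subseteq> R"
      using disj by blast
    then show ?thesis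
    proof cases
      case only_placed
      then have "m * card ({1..m} - R) \<le> m * card {k\<in>{1..m}. \<forall>x\<in>{1..m}. placed (x,k)}"
        by (intro mult_le_mono2 card_mono) auto
      also have "\<dots> \<le> m * (m div 2)"
        using card_full_rows_le_board[of m placed] half by simp
      finally have "m * card ({1..m} - R) \<le> m * (m div 2)" .
      moreover have "card ({1..m} - R) = m - card R"
        by (subst card_Diff_subset) (auto simp: R_def)
      ultimately have "m = 0 \<or> m - card R \<le> m div 2" by auto
      then show ?thesis by auto
    next
      case only_waiting
      then have "m * card {k\<in>{1..m}. \<exists>x\<in>{1..m}. placed (x,k)} \<le> m * card R"
        by (intro mult_le_mono2 card_mono) (auto simp: R_def)
      then have "m * (m div 2) \<le> m * card R"
        using card_board_le_meeting_rows[of m placed] half by linarith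
      then show ?thesis by (cases "m = 0") auto
    qed
  qed
  ultimately show ?thesis unfolding E_def by linarith
qed

text \<open>D(m, 2m) is tiled by the vertical dominoes {(x, 2k - 1), (x, 2k)}, indexed by the board
  {1..m} \<times> {1..m}; each contains one start and one goal vertex, and domino_cell inverts both maps.\<close>

definition domino_goal :: "nat \<times> nat \<Rightarrow> nat \<times> nat" where
  "domino_goal = (\<lambda>(x,k). (x, if odd x then 2 * k else 2 * k - 1))"

definition domino_start :: "nat \<times> nat \<Rightarrow> nat \<times> nat" where
  "domino_start = (\<lambda>(x,k). (x, if odd x then 2 * k - 1 else 2 * k))"

definition domino_cell :: "nat \<times> nat \<Rightarrow> nat \<times> nat" where
  "domino_cell = (\<lambda>(x,y). (x, (y + 1) div 2))"

lemma bij_betw_domino_goal: "bij_betw domino_goal ({1..m} \<times> {1..m}) (grid_goals m (2 * m))"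
  by (rule bij_betw_byWitness[where f' = domino_cell])
    (auto simp: domino_goal_def domino_cell_def grid_goals_def grid_vertex_def
      double_not_eq_Suc_double split: if_splits elim!: oddE)

lemma bij_betw_domino_start: "bij_betw domino_start ({1..m} \<times> {1..m}) (grid_starts m (2 * m))"
  by (rule bij_betw_byWitness[where f' = domino_cell])
    (auto simp: domino_start_def domino_cell_def grid_starts_def grid_vertex_def
      double_not_eq_Suc_double split: if_splits elim!: oddE)

lemma grid_adj_domino:
  shows "1 \<le> k \<Longrightarrow> grid_adj (domino_start (x,k)) (domino_goal (x,k))"
    and "1 \<le> k \<Longrightarrow> grid_adj (domino_start (Suc x,k)) (domino_goal (x,k))"
    and "1 \<le> k \<Longrightarrow> grid_adj (domino_start (x,k)) (domino_goal (Suc x,k))"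
    and "odd x \<Longrightarrow> grid_adj (domino_start (x,Suc k)) (domino_goal (x,k))"
    and "even x \<Longrightarrow> grid_adj (domino_start (x,k)) (domino_goal (x,Suc k))"
  by (auto simp: domino_start_def domino_goal_def grid_adj_def)

lemma card_separated_grid_sets:
  assumes X: "X \<subseteq> grid_goals m (2 * m)" and Y: "Y \<subseteq> grid_starts m (2 * m)"
    and sep: "\<forall>u\<in>Y. \<forall>v\<in>X. \<not> grid_adj u v"
    and half: "card X = m * (m div 2)"
  shows "card X + card Y + m div 2 \<le> m\<^sup>2"
proof -
  define D where "D = {1..m} \<times> {1..m}"
  define placed where "placed d \<longleftrightarrow> d \<in> D \<and> domino_goal d \<in> X" for d
  define waiting where "waiting d \<longleftrightarrow> d \<in> D \<and> domino_start d \<in> Y" for d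
  have card_X: "card {d\<in>D. placed d} = card X"
    using card_preimage_bij_betw[OF bij_betw_domino_goal X] by (simp add: placed_def D_def)
  have card_Y: "card {d\<in>D. waiting d} = card Y"
    using card_preimage_bij_betw[OF bij_betw_domino_start Y] by (simp add: waiting_def D_def)
  have no_adj: "\<not> grid_adj (domino_start d) (domino_goal d')" if "waiting d" "placed d'" for d d'
    using sep that unfolding placed_def waiting_def by blast
  have row_pos: "1 \<le> k" if "placed (x,k) \<or> waiting (x,k)" for x k
    using that by (auto simp: placed_def waiting_def D_def)
  have disj: "\<not> (placed d \<and> waiting d)" for d
  proof (cases d)
    case (Pair x k)
    then show ?thesis using no_adj grid_adj_domino(1)[of k x] row_pos by blast
  qed
  have "m div 2 \<le> card {d\<in>D. \<not> placed d \<and> \<not> waiting d}"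
    unfolding D_def
  proof (rule card_empty_cells_ge[OF disj])
    show "\<not> waiting (Suc x,k)" if "placed (x,k)" for x k
      using that no_adj grid_adj_domino(2)[of k x] row_pos by blast
    show "\<not> placed (Suc x,k)" if "waiting (x,k)" for x k
      using that no_adj grid_adj_domino(3)[of k x] row_pos by blast
    show "\<not> waiting (x,Suc k)" if "odd x" "placed (x,k)" for x k
      using that no_adj grid_adj_domino(4) by blast
    show "\<not> placed (x,Suc k)" if "even x" "waiting (x,k)" for x k
      using that no_adj grid_adj_domino(5) by blast
    show "card {d\<in>{1..m}\<times>{1..m}. placed d} = m * (m div 2)"
      using card_X half unfolding D_def by simp
  qed
  moreover have "card D = card {d\<in>D. placed d} + card {d\<in>D. waiting d}
      + card {d\<in>D. \<not> placed d \<and> \<not> waiting d}"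
    using disj by (intro card_three_way_split) (simp add: D_def)
  moreover have "card D = m\<^sup>2" by (simp add: D_def power2_eq_square)
  ultimately show ?thesis using card_X card_Y by linarith
qed

definition consistent_state ::
  "complex set \<Rightarrow> nat \<Rightarrow> (nat \<Rightarrow> pose) \<Rightarrow> (nat \<Rightarrow> pose) \<Rightarrow> state \<Rightarrow> bool" where
  "consistent_state F n s g = (\<lambda>(S, G, b).
     S \<subseteq> {..<n} \<and> G \<subseteq> {..<n} \<and> b + card S + card G = n \<and>
     (\<forall>i\<in>S. \<forall>j\<in>G. \<not> overlap F (s i) (g j)))"

lemma step_consistent:
  assumes step: "step F n s g a (S, G, b) = Some (S', G', b')"
    and cons: "consistent_state F n s g (S, G, b)"
  shows "consistent_state F n s g (S', G', b') \<and> card G' \<le> Suc (card G)"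
proof -
  have fin: "finite S" "finite G"
    using cons unfolding consistent_state_def by (auto intro: finite_subset)
  show ?thesis
  proof (cases a)
    case (ToGoal i j)
    then have "i \<in> S" "j < n" "j \<notin> G" "placeable F s g (S - {i}) G (g j)"
      and "S' = S - {i}" "G' = insert j G" "b' = b"
      using step by (auto split: if_splits)
    moreover from \<open>i \<in> S\<close> fin have "0 < card S" by (auto simp: card_gt_0_iff)
    ultimately show ?thesis
      using cons fin unfolding consistent_state_def placeable_def by auto
  next
    case (ToBuffer i)
    then have "i \<in> S" and "S' = S - {i}" "G' = G" "b' = Suc b"
      using step by (auto split: if_splits)
    moreover from \<open>i \<in> S\<close> fin have "0 < card S" by (auto simp: card_gt_0_iff)
    ultimately show ?thesis
      using cons fin unfolding consistent_state_def by auto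
  next
    case (FromBuffer j)
    then have "0 < b" "j < n" "j \<notin> G" "placeable F s g S G (g j)"
      and "S' = S" "G' = insert j G" "b' = b - 1"
      using step by (auto split: if_splits)
    with cons fin show ?thesis
      unfolding consistent_state_def placeable_def by auto
  qed
qed

lemma exec_nonempty: "exec F n s g st as = Some sts \<Longrightarrow> sts \<noteq> []"
  by (induction as arbitrary: st sts) (auto split: option.splits)

lemma exec_goal_count_intermediate:
  assumes "exec F n s g st as = Some sts" and "consistent_state F n s g st"
    and "card (fst (snd st)) \<le> T" and "T \<le> card (fst (snd (last sts)))"
  shows "\<exists>st'\<in>set sts. consistent_state F n s g st' \<and> card (fst (snd st')) = T"
  using assms
proof (induction as arbitrary: st sts)
  case (Cons a as)
  obtain st1 sts1 where step: "step F n s g a st = Some st1"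
    and exec1: "exec F n s g st1 as = Some sts1" and sts: "sts = st # sts1"
    using Cons.prems(1) by (auto split: option.splits)
  show ?case
  proof (cases "card (fst (snd st)) = T")
    case False
    obtain S G b S1 G1 b1 where "st = (S, G, b)" "st1 = (S1, G1, b1)" by (metis prod.exhaust)
    with step_consistent[of F n s g a S G b S1 G1 b1] step Cons.prems(2,3) False
    have "consistent_state F n s g st1" "card (fst (snd st1)) \<le> T" by auto
    moreover have "T \<le> card (fst (snd (last sts1)))"
      using Cons.prems(4) sts exec_nonempty[OF exec1] by simp
    ultimately show ?thesis using Cons.IH[OF exec1] sts by auto
  qed (use Cons.prems(2) sts in auto)
qed simp

definition exec_reaches ::
  "complex set \<Rightarrow> nat \<Rightarrow> (nat \<Rightarrow> pose) \<Rightarrow> (nat \<Rightarrow> pose) \<Rightarrow> state \<Rightarrow> action list \<Rightarrow> state \<Rightarrow> bool"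
  where
  "exec_reaches F n s g st as st' \<longleftrightarrow> (\<exists>sts. exec F n s g st as = Some sts \<and> last sts = st')"

lemma exec_reaches_Nil_iff: "exec_reaches F n s g st [] st' \<longleftrightarrow> st' = st"
  by (auto simp: exec_reaches_def)

lemma exec_reaches_Cons_iff:
  "exec_reaches F n s g st (a # as) st' \<longleftrightarrow>
   (\<exists>st1. step F n s g a st = Some st1 \<and> exec_reaches F n s g st1 as st')"
proof
  assume "exec_reaches F n s g st (a # as) st'"
  then obtain sts where exec: "exec F n s g st (a # as) = Some sts" and "last sts = st'"
    unfolding exec_reaches_def by blast
  then obtain st1 sts1 where "step F n s g a st = Some st1"
    and "exec F n s g st1 as = Some sts1" and "sts = st # sts1"
    by (auto split: option.splits)
  with \<open>last sts = st'\<close> exec_nonempty show "\<exists>st1. step F n s g a st = Some st1 \<and>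
      exec_reaches F n s g st1 as st'"
    unfolding exec_reaches_def by auto
next
  assume "\<exists>st1. step F n s g a st = Some st1 \<and> exec_reaches F n s g st1 as st'"
  then obtain st1 sts1 where "step F n s g a st = Some st1"
    and "exec F n s g st1 as = Some sts1" and "last sts1 = st'"
    unfolding exec_reaches_def by blast
  with exec_nonempty show "exec_reaches F n s g st (a # as) st'"
    unfolding exec_reaches_def by auto
qed

lemma exec_reaches_append:
  "exec_reaches F n s g st as st1 \<Longrightarrow> exec_reaches F n s g st1 bs st2 \<Longrightarrow>
   exec_reaches F n s g st (as @ bs) st2"
  by (induction as arbitrary: st) (auto simp: exec_reaches_Cons_iff exec_reaches_Nil_iff)

lemma exec_reaches_ToBuffer:
  "set xs \<subseteq> S \<Longrightarrow> distinct xs \<Longrightarrow>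
   exec_reaches F n s g (S, G, b) (map ToBuffer xs) (S - set xs, G, b + length xs)"
proof (induction xs arbitrary: S b)
  case (Cons x xs)
  then have "exec_reaches F n s g (S - {x}, G, Suc b) (map ToBuffer xs)
      (S - {x} - set xs, G, Suc b + length xs)"
    using Cons.IH[of "S - {x}" "Suc b"] by auto
  moreover have "step F n s g (ToBuffer x) (S, G, b) = Some (S - {x}, G, Suc b)"
    using Cons.prems by simp
  moreover have "S - {x} - set xs = S - set (x # xs)" by auto
  ultimately show ?case unfolding exec_reaches_Cons_iff list.map(2) by simp
qed (simp add: exec_reaches_Nil_iff)

lemma exec_reaches_FromBuffer:
  assumes "feasible_arr F n g"
  shows "set xs \<subseteq> {..<n} \<Longrightarrow> distinct xs \<Longrightarrow> set xs \<inter> G = {} \<Longrightarrow> G \<subseteq> {..<n} \<Longrightarrow>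
    length xs \<le> b \<Longrightarrow>
    exec_reaches F n s g ({}, G, b) (map FromBuffer xs) ({}, G \<union> set xs, b - length xs)"
proof (induction xs arbitrary: G b)
  case (Cons x xs)
  then have "exec_reaches F n s g ({}, insert x G, b - 1) (map FromBuffer xs)
      ({}, insert x G \<union> set xs, b - 1 - length xs)"
    using Cons.IH[of "insert x G" "b - 1"] by auto
  moreover have "placeable F s g {} G (g x)"
    using assms Cons.prems unfolding placeable_def feasible_arr_def by auto
  then have "step F n s g (FromBuffer x) ({}, G, b) = Some ({}, insert x G, b - 1)"
    using Cons.prems by simp
  moreover have "insert x G \<union> set xs = G \<union> set (x # xs)" by auto
  ultimately show ?case unfolding exec_reaches_Cons_iff list.map(2) by simp
qed (simp add: exec_reaches_Nil_iff)

lemma valid_plan_via_buffer: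
  assumes "feasible_arr F n g"
  shows "valid_plan F n s g (map ToBuffer [0..<n] @ map FromBuffer [0..<n])"
proof -
  have "exec_reaches F n s g (init_state n) (map ToBuffer [0..<n]) ({}, {}, n)"
    using exec_reaches_ToBuffer[of "[0..<n]" "{..<n}" F n s g "{}" 0]
    by (auto simp: init_state_def atLeast0LessThan)
  moreover have "exec_reaches F n s g ({}, {}, n) (map FromBuffer [0..<n]) ({}, {..<n}, 0)"
    using exec_reaches_FromBuffer[OF assms, of "[0..<n]" "{}" n] by (auto simp: atLeast0LessThan)
  ultimately have "exec_reaches F n s g (init_state n)
      (map ToBuffer [0..<n] @ map FromBuffer [0..<n]) ({}, {..<n}, 0)"
    by (rule exec_reaches_append)
  then show ?thesis unfolding valid_plan_def exec_reaches_def by auto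
qed

lemma max_running_buffers_ge_half:
  assumes iso: "dep_graph_iso_grid F (m\<^sup>2) s g m (2 * m)"
    and plan: "valid_plan F (m\<^sup>2) s g p"
  shows "m div 2 \<le> max_running_buffers F (m\<^sup>2) s g p"
proof -
  define n where "n = m\<^sup>2"
  obtain \<sigma> \<tau> where \<sigma>: "bij_betw \<sigma> {..<n} (grid_starts m (2 * m))"
    and \<tau>: "bij_betw \<tau> {..<n} (grid_goals m (2 * m))"
    and overlap_iff: "\<forall>i<n. \<forall>j<n. overlap F (s i) (g j) \<longleftrightarrow> grid_adj (\<sigma> i) (\<tau> j)"
    using iso unfolding dep_graph_iso_grid_def n_def by blast
  obtain sts where exec: "exec F n s g (init_state n) p = Some sts"
    and final: "fst (snd (last sts)) = {..<n}"
    using plan unfolding valid_plan_def n_def by blast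
  have "m * (m div 2) \<le> card (fst (snd (last sts)))"
    using final by (simp add: n_def power2_eq_square)
  moreover have "consistent_state F n s g (init_state n)"
    by (simp add: init_state_def consistent_state_def)
  ultimately obtain st where "st \<in> set sts" "consistent_state F n s g st"
    "card (fst (snd st)) = m * (m div 2)"
    using exec_goal_count_intermediate[OF exec, of "m * (m div 2)"]
    by (auto simp: init_state_def)
  then obtain S G b where mid: "(S, G, b) \<in> set sts" "consistent_state F n s g (S, G, b)"
    and card_G: "card G = m * (m div 2)"
    by (cases st rule: prod_cases3) auto
  then have S: "S \<subseteq> {..<n}" and G: "G \<subseteq> {..<n}" and count: "b + card S + card G = n"
    and separated: "\<forall>i\<in>S. \<forall>j\<in>G. \<not> overlap F (s i) (g j)"
    unfolding consistent_state_def by auto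
  have card_\<sigma>: "card (\<sigma> ` S) = card S" and card_\<tau>: "card (\<tau> ` G) = card G"
    using S G \<sigma> \<tau> by (auto intro!: card_image dest: bij_betw_imp_inj_on intro: inj_on_subset)
  have "card (\<tau> ` G) + card (\<sigma> ` S) + m div 2 \<le> m\<^sup>2"
  proof (rule card_separated_grid_sets)
    show "\<tau> ` G \<subseteq> grid_goals m (2 * m)" using G \<tau> by (auto dest: bij_betw_imp_surj_on)
    show "\<sigma> ` S \<subseteq> grid_starts m (2 * m)" using S \<sigma> by (auto dest: bij_betw_imp_surj_on)
    show "\<forall>u\<in>\<sigma> ` S. \<forall>v\<in>\<tau> ` G. \<not> grid_adj u v"
      using overlap_iff separated S G by blast
  qed (simp add: card_\<tau> card_G)
  then have "m div 2 \<le> b" using count card_\<sigma> card_\<tau> n_def by linarith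
  also have "b \<le> Max ((\<lambda>st. snd (snd st)) ` set sts)"
    using mid(1) by (intro Max_ge) force+
  also have "\<dots> = max_running_buffers F n s g p"
    unfolding max_running_buffers_def using exec by simp
  finally show ?thesis unfolding n_def .
qed

theorem lemma2:
  shows "\<exists>c::real. c > 0 \<and> (\<exists>m0::nat. \<forall>m\<ge>m0.
     \<forall>(F::complex set) (W::complex set) (s::nat \<Rightarrow> pose) (g::nat \<Rightarrow> pose).
       utr_instance F W (m\<^sup>2) s g \<and> dep_graph_iso_grid F (m\<^sup>2) s g m (2 * m)
       \<longrightarrow> c * real m \<le> real (MRB F (m\<^sup>2) s g))"
proof (intro exI conjI allI impI)
  show "(1 / 4 :: real) > 0" by simp
  fix m :: nat and F W s g
  assume "2 \<le> m"
    and inst: "utr_instance F W (m\<^sup>2) s g \<and> dep_graph_iso_grid F (m\<^sup>2) s g m (2 * m)"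
  have "m div 2 \<le> MRB F (m\<^sup>2) s g"
    unfolding MRB_def
  proof (rule cINF_greatest)
    show "{p. valid_plan F (m\<^sup>2) s g p} \<noteq> {}"
      using valid_plan_via_buffer inst unfolding utr_instance_def by blast
    show "m div 2 \<le> max_running_buffers F (m\<^sup>2) s g p"
      if "p \<in> {p. valid_plan F (m\<^sup>2) s g p}" for p using max_running_buffers_ge_half inst that by blast
  qed
  then have "real (m div 2) \<le> real (MRB F (m\<^sup>2) s g)" by simp
  moreover have "real m \<le> 4 * real (m div 2)"
    using \<open>2 \<le> m\<close> by linarith
  ultimately show "1 / 4 * real m \<le> real (MRB F (m\<^sup>2) s g)" by linarith
qed

end
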